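(* Let $T>0$, $\lambda>0$, let $\theta:[0,T]\to(0,\infty)$ be continuous, $g_t=\sqrt{2\lambda^2\theta_t}$, $\bar\theta_T=\int_0^T\theta_zdz$, $\gamma\in(0,\infty)$, and $x_0,x_T\in\mathbb{R}^d$. Consider the problem of minimizing $\int_0^T\frac12\|\mathbf{u}_t\|_2^2dt+\frac\gamma2\|\mathbf{x}^u_T-x_T\|_2^2$ over controls $\mathbf{u}:[0,T]\to\mathbb{R}^d$, subject to $\frac{d\mathbf{x}_t}{dt}=\theta_t(x_T-\mathbf{x}_t)+g_t\mathbf{u}_t$, $\mathbf{x}^u_0=x_0$. Then the terminal state $\mathbf{x}^u_T$ of the optimally controlled trajectory satisfies $$\|\mathbf{x}^u_T-x_T\|_2^2=\frac{e^{-2\bar\theta_T}}{\big(1+\gamma\lambda^2(1-e^{-2\bar\theta_T})\big)^2}\,\|x_T-x_0\|_2^2 .$$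
   Context: This is the optimal control problem associated with the generalized Ornstein–Uhlenbeck process $d\mathbf{x}_t=\theta_t(\boldsymbol{\mu}-\mathbf{x}_t)dt+g_td\mathbf{w}_t$ with mean $\boldsymbol{\mu}=x_T$ and $g_t^2=2\lambda^2\theta_t$. *)

theory Defs
  imports "HOL-Analysis.Analysis"
begin

definition ou_g :: "real \<Rightarrow> (real \<Rightarrow> real) \<Rightarrow> real \<Rightarrow> real" where
  "ou_g lam \<theta> t = sqrt (2 * lam\<^sup>2 * \<theta> t)"

definition ou_admissible ::
  "real \<Rightarrow> real \<Rightarrow> (real \<Rightarrow> real) \<Rightarrow> 'a::euclidean_space \<Rightarrow> 'a \<Rightarrow>
   (real \<Rightarrow> 'a) \<Rightarrow> (real \<Rightarrow> 'a) \<Rightarrow> bool" where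
  "ou_admissible T lam \<theta> x0 xT u x \<longleftrightarrow>
     continuous_on {0..T} u \<and> x 0 = x0 \<and>
     (\<forall>t\<in>{0..T}. (x has_vector_derivative
        (\<theta> t *\<^sub>R (xT - x t) + ou_g lam \<theta> t *\<^sub>R u t)) (at t within {0..T}))"

definition ou_cost ::
  "real \<Rightarrow> real \<Rightarrow> 'a::euclidean_space \<Rightarrow> (real \<Rightarrow> 'a) \<Rightarrow> (real \<Rightarrow> 'a) \<Rightarrow> real" where
  "ou_cost T \<gamma> xT u x =
     integral {0..T} (\<lambda>t. (1/2) * (norm (u t))\<^sup>2) + (\<gamma>/2) * (norm (x T - xT))\<^sup>2"

definition ou_optimal ::
  "real \<Rightarrow> real \<Rightarrow> (real \<Rightarrow> real) \<Rightarrow> real \<Rightarrow> 'a::euclidean_space \<Rightarrow> 'a \<Rightarrow>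
   (real \<Rightarrow> 'a) \<Rightarrow> (real \<Rightarrow> 'a) \<Rightarrow> bool" where
  "ou_optimal T lam \<theta> \<gamma> x0 xT u x \<longleftrightarrow>
     ou_admissible T lam \<theta> x0 xT u x \<and>
     (\<forall>v y. ou_admissible T lam \<theta> x0 xT v y \<longrightarrow>
        ou_cost T \<gamma> xT u x \<le> ou_cost T \<gamma> xT v y)"

end

theory Submission
  imports Defs
begin

(* With the integrating factor exp(theta_bar t), every admissible pair satisfies
     x T - xT = exp(-theta_bar T) (x0 - xT) + int_0^T k s u s ds,
   k s = exp(theta_bar s - theta_bar T) g s, so the terminal residual is affine in the
   control and the problem becomes the linear-quadratic one of minimising
   1/2 int |u|^2 + gamma/2 |r + int k u|^2.  Its minimiser is u = k c with a constant
   adjoint vector c = -gamma (optimal residual); completing the square shows that any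
   other control costs at least gamma/2 |change of residual|^2 more, so every optimal
   trajectory ends with the residual r / (1 + gamma int k^2).  Finally
   int_0^T k^2 = lam^2 (1 - exp(-2 theta_bar T)), since k s^2 = 2 lam^2 theta s
   exp(2 (theta_bar s - theta_bar T)) is the derivative of lam^2 exp(2 (theta_bar s - theta_bar T)). *)

definition lq_cost :: "real \<Rightarrow> real \<Rightarrow> real \<Rightarrow> (real \<Rightarrow> real) \<Rightarrow> 'a::real_inner \<Rightarrow> (real \<Rightarrow> 'a) \<Rightarrow> real" where
  "lq_cost a b \<gamma> k r v = integral {a..b} (\<lambda>s. (1/2) * (norm (v s))\<^sup>2)
     + \<gamma>/2 * (norm (r + integral {a..b} (\<lambda>s. k s *\<^sub>R v s)))\<^sup>2"

lemma integral_energy_ge_tangent: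
  fixes a b :: real and c :: "'a::{real_inner,banach}"
  assumes k: "continuous_on {a..b} k" and v: "continuous_on {a..b} v"
  shows "integral {a..b} (\<lambda>s. (1/2) * (norm (k s *\<^sub>R c))\<^sup>2)
      + c \<bullet> (integral {a..b} (\<lambda>s. k s *\<^sub>R v s) - integral {a..b} (\<lambda>s. k s *\<^sub>R (k s *\<^sub>R c)))
    \<le> integral {a..b} (\<lambda>s. (1/2) * (norm (v s))\<^sup>2)"
proof -
  define w where "w s = k s *\<^sub>R c" for s
  have w: "continuous_on {a..b} w"
    unfolding w_def by (intro continuous_intros k)
  have pointwise: "(1/2) * (norm (w s))\<^sup>2 + c \<bullet> (k s *\<^sub>R v s - k s *\<^sub>R w s) \<le> (1/2) * (norm (v s))\<^sup>2"
    for s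
  proof -
    have "(norm (v s))\<^sup>2 = (norm (w s))\<^sup>2 + 2 * (c \<bullet> (k s *\<^sub>R v s - k s *\<^sub>R w s)) + (norm (v s - w s))\<^sup>2"
      unfolding power2_norm_eq_inner w_def
      by (simp add: inner_commute algebra_simps power2_eq_square)
    then show ?thesis by simp
  qed
  have kv: "(\<lambda>s. k s *\<^sub>R v s) integrable_on {a..b}"
    by (intro integrable_continuous_interval continuous_intros k v)
  have kw: "(\<lambda>s. k s *\<^sub>R w s) integrable_on {a..b}"
    by (intro integrable_continuous_interval continuous_intros k w)
  have "integral {a..b} (\<lambda>s. c \<bullet> (k s *\<^sub>R v s - k s *\<^sub>R w s))
      = c \<bullet> (integral {a..b} (\<lambda>s. k s *\<^sub>R v s) - integral {a..b} (\<lambda>s. k s *\<^sub>R w s))"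
    using integral_linear[OF integrable_diff[OF kv kw] bounded_linear_inner_right[of c]]
    by (simp add: o_def integral_diff[OF kv kw])
  moreover have "(\<lambda>s. (1/2) * (norm (w s))\<^sup>2) integrable_on {a..b}"
    and "(\<lambda>s. c \<bullet> (k s *\<^sub>R v s - k s *\<^sub>R w s)) integrable_on {a..b}"
    by (intro integrable_continuous_interval continuous_intros k v w)+
  moreover have "integral {a..b} (\<lambda>s. (1/2) * (norm (w s))\<^sup>2 + c \<bullet> (k s *\<^sub>R v s - k s *\<^sub>R w s))
      \<le> integral {a..b} (\<lambda>s. (1/2) * (norm (v s))\<^sup>2)"
    using pointwise by (intro integral_le integrable_continuous_interval continuous_intros k v w) auto
  ultimately show ?thesis
    by (simp add: integral_add w_def)
qed

lemma lq_cost_completion: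
  fixes r c :: "'a::{real_inner,banach}"
  assumes k: "continuous_on {a..b} k" and v: "continuous_on {a..b} v"
    and adjoint: "c = - \<gamma> *\<^sub>R (r + integral {a..b} (\<lambda>s. k s *\<^sub>R (k s *\<^sub>R c)))"
  shows "lq_cost a b \<gamma> k r (\<lambda>s. k s *\<^sub>R c)
      + \<gamma>/2 * (norm (integral {a..b} (\<lambda>s. k s *\<^sub>R v s) - integral {a..b} (\<lambda>s. k s *\<^sub>R (k s *\<^sub>R c))))\<^sup>2
    \<le> lq_cost a b \<gamma> k r v"
proof -
  define R where "R = r + integral {a..b} (\<lambda>s. k s *\<^sub>R (k s *\<^sub>R c))"
  define z where "z = integral {a..b} (\<lambda>s. k s *\<^sub>R v s) - integral {a..b} (\<lambda>s. k s *\<^sub>R (k s *\<^sub>R c))"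
  define E where "E u = integral {a..b} (\<lambda>s. (1/2) * (norm (u s))\<^sup>2)" for u :: "real \<Rightarrow> 'a"
  have "E (\<lambda>s. k s *\<^sub>R c) + c \<bullet> z \<le> E v"
    using integral_energy_ge_tangent[OF k v, of c] by (simp only: E_def z_def)
  moreover have "c \<bullet> z = - \<gamma> * (R \<bullet> z)"
  proof -
    have "c = - \<gamma> *\<^sub>R R"
      using adjoint by (simp add: R_def)
    then show ?thesis by simp
  qed
  moreover have "(norm (R + z))\<^sup>2 = (norm R)\<^sup>2 + 2 * (R \<bullet> z) + (norm z)\<^sup>2"
    by (simp add: power2_norm_eq_inner inner_add_left inner_add_right inner_commute)
  moreover have "lq_cost a b \<gamma> k r v = E v + \<gamma>/2 * (norm (R + z))\<^sup>2"
    by (simp add: lq_cost_def E_def R_def z_def)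
  moreover have "lq_cost a b \<gamma> k r (\<lambda>s. k s *\<^sub>R c) = E (\<lambda>s. k s *\<^sub>R c) + \<gamma>/2 * (norm R)\<^sup>2"
    by (simp add: lq_cost_def E_def R_def)
  ultimately show ?thesis
    unfolding z_def[symmetric] by (simp add: algebra_simps)
qed

lemma lq_cost_minimizer:
  fixes r :: "'a::{real_inner,banach}"
  assumes k: "continuous_on {a..b} k" and "\<gamma> > 0"
  defines "D \<equiv> 1 + \<gamma> * integral {a..b} (\<lambda>s. (k s)\<^sup>2)"
  defines "c \<equiv> (- \<gamma> / D) *\<^sub>R r"
  shows "continuous_on {a..b} (\<lambda>s. k s *\<^sub>R c)"
    and "r + integral {a..b} (\<lambda>s. k s *\<^sub>R (k s *\<^sub>R c)) = (1 / D) *\<^sub>R r"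
    and "continuous_on {a..b} v \<Longrightarrow> lq_cost a b \<gamma> k r (\<lambda>s. k s *\<^sub>R c) \<le> lq_cost a b \<gamma> k r v"
    and "continuous_on {a..b} v \<Longrightarrow> lq_cost a b \<gamma> k r v \<le> lq_cost a b \<gamma> k r (\<lambda>s. k s *\<^sub>R c) \<Longrightarrow>
      integral {a..b} (\<lambda>s. k s *\<^sub>R v s) = integral {a..b} (\<lambda>s. k s *\<^sub>R (k s *\<^sub>R c))"
proof -
  show "continuous_on {a..b} (\<lambda>s. k s *\<^sub>R c)"
    by (intro continuous_intros k)
  have k2: "(\<lambda>s. (k s)\<^sup>2) integrable_on {a..b}"
    by (intro integrable_continuous_interval continuous_intros k)
  have "D > 0"
    unfolding D_def using \<open>\<gamma> > 0\<close> by (intro add_pos_nonneg mult_nonneg_nonneg integral_nonneg k2) auto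
  have "(\<lambda>s. k s *\<^sub>R (k s *\<^sub>R c)) = (\<lambda>s. (k s)\<^sup>2 *\<^sub>R c)"
    by (simp add: power2_eq_square)
  then have "integral {a..b} (\<lambda>s. k s *\<^sub>R (k s *\<^sub>R c)) = integral {a..b} (\<lambda>s. (k s)\<^sup>2) *\<^sub>R c"
    by (simp only: integral_unique[OF has_integral_scaleR_left[OF integrable_integral[OF k2]]])
  also have "\<dots> = (1 / D - 1) *\<^sub>R r"
    using \<open>D > 0\<close> by (simp add: c_def D_def field_simps)
  finally show residual: "r + integral {a..b} (\<lambda>s. k s *\<^sub>R (k s *\<^sub>R c)) = (1 / D) *\<^sub>R r"
    by (simp add: algebra_simps)
  then have adjoint: "c = - \<gamma> *\<^sub>R (r + integral {a..b} (\<lambda>s. k s *\<^sub>R (k s *\<^sub>R c)))"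
    by (simp add: c_def)
  assume v: "continuous_on {a..b} v"
  define gap where
    "gap = (norm (integral {a..b} (\<lambda>s. k s *\<^sub>R v s) - integral {a..b} (\<lambda>s. k s *\<^sub>R (k s *\<^sub>R c))))\<^sup>2"
  have completion: "lq_cost a b \<gamma> k r (\<lambda>s. k s *\<^sub>R c) + \<gamma>/2 * gap \<le> lq_cost a b \<gamma> k r v"
    using lq_cost_completion[OF k v adjoint] by (simp add: gap_def)
  moreover have "\<gamma>/2 * gap \<ge> 0"
    using \<open>\<gamma> > 0\<close> by (simp add: gap_def)
  ultimately show "lq_cost a b \<gamma> k r (\<lambda>s. k s *\<^sub>R c) \<le> lq_cost a b \<gamma> k r v"
    by linarith
  assume "lq_cost a b \<gamma> k r v \<le> lq_cost a b \<gamma> k r (\<lambda>s. k s *\<^sub>R c)"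
  with completion have "\<gamma>/2 * gap \<le> 0"
    by linarith
  with \<open>\<gamma> > 0\<close> have "gap = 0"
    by (simp add: gap_def mult_le_0_iff)
  then show "integral {a..b} (\<lambda>s. k s *\<^sub>R v s) = integral {a..b} (\<lambda>s. k s *\<^sub>R (k s *\<^sub>R c))"
    by (simp add: gap_def)
qed

definition ou_kernel :: "real \<Rightarrow> real \<Rightarrow> (real \<Rightarrow> real) \<Rightarrow> real \<Rightarrow> real" where
  "ou_kernel T lam \<theta> s = exp (integral {0..s} \<theta> - integral {0..T} \<theta>) * ou_g lam \<theta> s"

lemma continuous_on_ou_kernel:
  assumes "continuous_on {0..T} \<theta>"
  shows "continuous_on {0..T} (ou_kernel T lam \<theta>)"
  unfolding ou_kernel_def[abs_def] ou_g_def
  by (intro continuous_intros assms indefinite_integral_continuous_1 integrable_continuous_interval)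

lemma ou_admissible_terminal_state:
  assumes "T \<ge> 0" and \<theta>: "continuous_on {0..T} \<theta>"
    and adm: "ou_admissible T lam \<theta> x0 xT v x"
  shows "x T - xT = exp (- integral {0..T} \<theta>) *\<^sub>R (x0 - xT)
    + integral {0..T} (\<lambda>s. ou_kernel T lam \<theta> s *\<^sub>R v s)"
proof -
  define \<Theta> where "\<Theta> t = integral {0..t} \<theta>" for t
  define g where "g = ou_g lam \<theta>"
  from adm have x0: "x 0 = x0" and dx: "\<And>t. t \<in> {0..T} \<Longrightarrow>
      (x has_vector_derivative \<theta> t *\<^sub>R (xT - x t) + g t *\<^sub>R v t) (at t within {0..T})"
    unfolding ou_admissible_def g_def by auto
  have "((\<lambda>t. exp (\<Theta> t) *\<^sub>R (x t - xT)) has_vector_derivative (exp (\<Theta> t) * g t) *\<^sub>R v t)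
      (at t within {0..T})" if t: "t \<in> {0..T}" for t
    using integral_has_real_derivative[OF \<theta> t] dx[OF t] unfolding \<Theta>_def
    by (auto intro!: derivative_eq_intros simp: algebra_simps)
  then have ftc: "((\<lambda>t. (exp (\<Theta> t) * g t) *\<^sub>R v t) has_integral
      exp (\<Theta> T) *\<^sub>R (x T - xT) - (x0 - xT)) {0..T}"
    using fundamental_theorem_of_calculus[OF \<open>T \<ge> 0\<close>, of "\<lambda>t. exp (\<Theta> t) *\<^sub>R (x t - xT)"]
    by (simp add: \<Theta>_def x0)
  have kernel: "ou_kernel T lam \<theta> s *\<^sub>R v s = exp (- \<Theta> T) *\<^sub>R ((exp (\<Theta> s) * g s) *\<^sub>R v s)" for s
    by (simp add: ou_kernel_def \<Theta>_def g_def exp_diff exp_minus field_simps)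
  have "((\<lambda>s. ou_kernel T lam \<theta> s *\<^sub>R v s) has_integral
      exp (- \<Theta> T) *\<^sub>R (exp (\<Theta> T) *\<^sub>R (x T - xT) - (x0 - xT))) {0..T}"
    unfolding kernel by (rule has_integral_cmul[OF ftc])
  then show ?thesis
    by (simp add: integral_unique \<Theta>_def scaleR_diff_right flip: exp_add)
qed

lemma ou_cost_eq_lq_cost:
  assumes "T \<ge> 0" and "continuous_on {0..T} \<theta>"
    and "ou_admissible T lam \<theta> x0 xT v x"
  shows "ou_cost T \<gamma> xT v x
    = lq_cost 0 T \<gamma> (ou_kernel T lam \<theta>) (exp (- integral {0..T} \<theta>) *\<^sub>R (x0 - xT)) v"
  using ou_admissible_terminal_state[OF assms] by (simp add: ou_cost_def lq_cost_def)

lemma ou_admissible_exists: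
  assumes \<theta>: "continuous_on {0..T} \<theta>" and v: "continuous_on {0..T} v"
  shows "\<exists>x. ou_admissible T lam \<theta> x0 xT v x"
proof -
  define \<Theta> where "\<Theta> t = integral {0..t} \<theta>" for t
  define f where "f s = (exp (\<Theta> s) * ou_g lam \<theta> s) *\<^sub>R v s" for s
  have f: "continuous_on {0..T} f"
    unfolding f_def[abs_def] \<Theta>_def ou_g_def
    by (intro continuous_intros \<theta> v indefinite_integral_continuous_1 integrable_continuous_interval)
  define x where "x t = xT + exp (- \<Theta> t) *\<^sub>R (x0 - xT + integral {0..t} f)" for t
  have "ou_admissible T lam \<theta> x0 xT v x"
    unfolding ou_admissible_def
  proof (intro conjI ballI v)
    show "x 0 = x0"
      by (simp add: x_def \<Theta>_def)
    fix t assume t: "t \<in> {0..T}"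
    show "(x has_vector_derivative \<theta> t *\<^sub>R (xT - x t) + ou_g lam \<theta> t *\<^sub>R v t) (at t within {0..T})"
      using integral_has_real_derivative[OF \<theta> t] integral_has_vector_derivative[OF f t]
      unfolding x_def \<Theta>_def f_def
      by (auto intro!: derivative_eq_intros simp: exp_minus field_simps)
  qed
  then show ?thesis by blast
qed

lemma integral_ou_kernel_square:
  assumes "T \<ge> 0" and \<theta>: "continuous_on {0..T} \<theta>" and nonneg: "\<And>t. t \<in> {0..T} \<Longrightarrow> \<theta> t \<ge> 0"
  shows "integral {0..T} (\<lambda>s. (ou_kernel T lam \<theta> s)\<^sup>2) = lam\<^sup>2 * (1 - exp (-2 * integral {0..T} \<theta>))"
proof -
  define \<Theta> where "\<Theta> t = integral {0..t} \<theta>" for t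
  have "((\<lambda>s. lam\<^sup>2 * exp (2 * (\<Theta> s - \<Theta> T))) has_real_derivative (ou_kernel T lam \<theta> s)\<^sup>2)
      (at s within {0..T})" if s: "s \<in> {0..T}" for s
  proof -
    have "(ou_kernel T lam \<theta> s)\<^sup>2 = lam\<^sup>2 * exp (2 * (\<Theta> s - \<Theta> T)) * (2 * \<theta> s)"
      using nonneg[OF s]
      by (simp add: ou_kernel_def ou_g_def \<Theta>_def power_mult_distrib flip: exp_double)
    then show ?thesis
      using integral_has_real_derivative[OF \<theta> s] unfolding \<Theta>_def
      by (auto intro!: derivative_eq_intros)
  qed
  then have "((\<lambda>s. (ou_kernel T lam \<theta> s)\<^sup>2) has_integral
      lam\<^sup>2 * exp (2 * (\<Theta> T - \<Theta> T)) - lam\<^sup>2 * exp (2 * (\<Theta> 0 - \<Theta> T))) {0..T}"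
    using \<open>T \<ge> 0\<close>
    by (intro fundamental_theorem_of_calculus) (auto simp: has_real_derivative_iff_has_vector_derivative)
  then show ?thesis
    by (simp add: integral_unique \<Theta>_def algebra_simps)
qed

lemma ou_optimal_control:
  fixes lam :: real and x0 xT :: "'a::euclidean_space"
  assumes "T \<ge> 0" and \<theta>: "continuous_on {0..T} \<theta>" and "\<gamma> > 0"
  defines "r \<equiv> exp (- integral {0..T} \<theta>) *\<^sub>R (x0 - xT)"
    and "D \<equiv> 1 + \<gamma> * integral {0..T} (\<lambda>s. (ou_kernel T lam \<theta> s)\<^sup>2)"
  shows "\<exists>u x. ou_optimal T lam \<theta> \<gamma> x0 xT u x"
    and "ou_optimal T lam \<theta> \<gamma> x0 xT u x \<Longrightarrow> x T - xT = (1 / D) *\<^sub>R r"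
proof -
  define k where "k = ou_kernel T lam \<theta>"
  define c where "c = (- \<gamma> / D) *\<^sub>R r"
  define w where "w s = k s *\<^sub>R c" for s
  note lq = lq_cost_minimizer[OF continuous_on_ou_kernel[OF \<theta>, where lam = lam] \<open>\<gamma> > 0\<close>, where r = r,
      folded D_def, folded k_def c_def, folded w_def]
  have cost: "ou_cost T \<gamma> xT v y = lq_cost 0 T \<gamma> k r v"
    and control: "continuous_on {0..T} v" if "ou_admissible T lam \<theta> x0 xT v y" for v y
    using ou_cost_eq_lq_cost[OF \<open>T \<ge> 0\<close> \<theta> that] that by (simp_all add: k_def r_def ou_admissible_def)
  obtain xs where xs: "ou_admissible T lam \<theta> x0 xT w xs"
    using ou_admissible_exists[OF \<theta> lq(1)] by blast
  have "ou_optimal T lam \<theta> \<gamma> x0 xT w xs"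
    unfolding ou_optimal_def
  proof (intro conjI allI impI xs)
    fix v y assume "ou_admissible T lam \<theta> x0 xT v y"
    then show "ou_cost T \<gamma> xT w xs \<le> ou_cost T \<gamma> xT v y"
      using lq(3)[OF control] cost xs by simp
  qed
  then show "\<exists>u x. ou_optimal T lam \<theta> \<gamma> x0 xT u x"
    by blast
  assume "ou_optimal T lam \<theta> \<gamma> x0 xT u x"
  with xs have adm: "ou_admissible T lam \<theta> x0 xT u x" and "ou_cost T \<gamma> xT u x \<le> ou_cost T \<gamma> xT w xs"
    unfolding ou_optimal_def by auto
  then have "integral {0..T} (\<lambda>s. k s *\<^sub>R u s) = integral {0..T} (\<lambda>s. k s *\<^sub>R w s)"
    using lq(4)[OF control[OF adm]] cost[OF adm] cost[OF xs] by simp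
  moreover have "x T - xT = r + integral {0..T} (\<lambda>s. k s *\<^sub>R u s)"
    using ou_admissible_terminal_state[OF \<open>T \<ge> 0\<close> \<theta> adm] by (simp add: k_def r_def)
  ultimately show "x T - xT = (1 / D) *\<^sub>R r"
    using lq(2) by simp
qed

theorem proposition4p5:
  fixes T lam \<gamma> :: real and \<theta> :: "real \<Rightarrow> real" and x0 xT :: "'a::euclidean_space"
  assumes "T > 0" and "lam > 0" and "\<gamma> > 0"
    and "continuous_on {0..T} \<theta>" and "\<And>t. t \<in> {0..T} \<Longrightarrow> \<theta> t > 0"
  shows "(\<exists>u x. ou_optimal T lam \<theta> \<gamma> x0 xT u x) \<and>
    (\<forall>u x. ou_optimal T lam \<theta> \<gamma> x0 xT u x \<longrightarrow>
      (norm (x T - xT))\<^sup>2 =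
        exp (-2 * integral {0..T} \<theta>)
          / (1 + \<gamma> * lam\<^sup>2 * (1 - exp (-2 * integral {0..T} \<theta>)))\<^sup>2
          * (norm (xT - x0))\<^sup>2)"
proof -
  have "T \<ge> 0" and \<theta>: "continuous_on {0..T} \<theta>"
    using assms by auto
  define D where "D = 1 + \<gamma> * lam\<^sup>2 * (1 - exp (-2 * integral {0..T} \<theta>))"
  have "integral {0..T} (\<lambda>s. (ou_kernel T lam \<theta> s)\<^sup>2) = lam\<^sup>2 * (1 - exp (-2 * integral {0..T} \<theta>))"
    using integral_ou_kernel_square[OF \<open>T \<ge> 0\<close> \<theta>] assms(5) by (simp add: less_imp_le)
  note optimal = ou_optimal_control[OF \<open>T \<ge> 0\<close> \<theta> \<open>\<gamma> > 0\<close>, where lam = lam, unfolded this]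
  have "(norm (x T - xT))\<^sup>2 = exp (-2 * integral {0..T} \<theta>) / D\<^sup>2 * (norm (xT - x0))\<^sup>2"
    if "ou_optimal T lam \<theta> \<gamma> x0 xT u x" for u x
    using optimal(2)[OF that]
    by (simp add: D_def mult.assoc power_mult_distrib power_divide norm_minus_commute exp_double[symmetric])
  then show ?thesis
    using optimal(1) by (simp add: D_def)
qed

end
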